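(* For every 2-coloring of the edges of $K_{\mathbb{N},\mathbb{N}}$, the vertex set can be partitioned into a finite set and at most two monochromatic paths (each path finite or one-way infinite, each monochromatic in some color).
   Context: $K_{\mathbb{N},\mathbb{N}}$ is the complete bipartite graph on $\mathbb{N}$ whose parts are the even and the odd positive integers. A monochromatic path is a path all of whose edges have the same color. *)

theory Defs
  imports Main
begin

text \<open>Vertices of K_{N,N}: the positive integers; parts are the even and the odd ones.
  Two vertices are adjacent iff both are positive and they have different parity.\<close>
definition KNN_vertices :: "nat set" where
  "KNN_vertices = {n. n \<ge> 1}"

definition KNN_adj :: "nat \<Rightarrow> nat \<Rightarrow> bool" where
  "KNN_adj x y \<longleftrightarrow> x \<ge> 1 \<and> y \<ge> 1 \<and> odd (x + y)"

text \<open>P is (the vertex set of) a monochromatic path of colour col: either a finite path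
  (a list of distinct vertices, consecutive ones adjacent, all edges coloured col;
  the empty list encodes an absent path) or a one-way infinite path.\<close>
definition mono_path :: "(nat set \<Rightarrow> bool) \<Rightarrow> bool \<Rightarrow> nat set \<Rightarrow> bool" where
  "mono_path c col P \<longleftrightarrow>
     (\<exists>xs. P = set xs \<and> distinct xs \<and>
        (\<forall>i. Suc i < length xs \<longrightarrow>
           KNN_adj (xs ! i) (xs ! Suc i) \<and> c {xs ! i, xs ! Suc i} = col))
   \<or> (\<exists>f :: nat \<Rightarrow> nat. inj f \<and> P = range f \<and>
        (\<forall>i. KNN_adj (f i) (f (Suc i)) \<and> c {f i, f (Suc i)} = col))"

end

theory Submission
  imports Defs "HOL-Library.Sublist"
begin

text \<open>Fix free ultrafilters on the even and on the odd vertices and call a vertex typical for a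
  colour if its neighbourhood in that colour is large on the other side. Two typical vertices on
  the same side have infinitely many common neighbours, so they are robustly connected: joined by
  a monochromatic path avoiding any prescribed finite set. Every vertex is typical for some colour,
  and looking at the edges between the two sides of one colour merges the four resulting linked
  sets into two, up to a finite set. Two infinite linked sets are finally exhausted by two disjoint
  monochromatic paths, grown alternately towards the least vertex not used so far.\<close>

section \<open>Free ultrafilters\<close>

definition free_ultrafilter :: "'a filter \<Rightarrow> bool" where
  "free_ultrafilter F \<longleftrightarrow>
     F \<noteq> bot \<and> F \<le> cofinite \<and> (\<forall>P. eventually P F \<or> eventually (\<lambda>x. \<not> P x) F)"

lemma free_ultrafilter_exists:
  assumes "infinite (UNIV :: 'a set)"
  shows "\<exists>F :: 'a filter. free_ultrafilter F"
proof -
  \<comment> \<open>Zorn's lemma for the proper filters finer than the cofinite filter, ordered by refinement.\<close>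
  define R where "R = {(G, H). H \<noteq> (bot :: 'a filter) \<and> H \<le> G \<and> G \<le> cofinite}"
  have field_R: "Field R = {G. G \<noteq> bot \<and> G \<le> cofinite}"
    by (auto simp: R_def Field_def bot_unique)
  have "\<exists>U\<in>Field R. \<forall>G\<in>Field R. (U, G) \<in> R \<longrightarrow> G = U"
  proof (rule Zorns_po_lemma)
    show "Partial_order R"
      by (auto simp: R_def partial_order_on_def preorder_on_def
          antisym_def refl_on_def trans_def Field_def bot_unique)
    show "\<exists>U\<in>Field R. \<forall>G\<in>C. (G, U) \<in> R" if C: "C \<in> Chains R" for C
    proof (cases "C = {}")
      case True
      then show ?thesis using assms by (intro bexI[of _ cofinite]) (auto simp: field_R)
    next
      case False
      have "Inf C = bot \<longleftrightarrow> (\<exists>G\<in>C. G = bot)"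
        unfolding trivial_limit_def using C False
        by (intro eventually_Inf_base) (auto simp: Chains_def R_def)
      then have ne: "Inf C \<noteq> bot" using C by (auto simp: Chains_def R_def)
      from False obtain G where "G \<in> C" by auto
      with C have "Inf C \<le> cofinite"
        by (auto intro!: Inf_lower2[of G] simp: Chains_def R_def)
      with ne have "Inf C \<in> Field R" by (simp add: field_R)
      moreover have "\<forall>G\<in>C. (G, Inf C) \<in> R"
        using C ne by (auto intro: Inf_lower simp: Chains_def R_def)
      ultimately show ?thesis by blast
    qed
  qed
  then obtain U where "U \<in> Field R" and max: "\<forall>G\<in>Field R. (U, G) \<in> R \<longrightarrow> G = U"
    by blast
  then have U: "U \<noteq> bot" "U \<le> cofinite" by (simp_all add: field_R)
  have maximal: "G = U" if "G \<noteq> bot" "G \<le> U" for G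
  proof -
    have "G \<in> Field R" using that U(2) by (simp add: field_R)
    moreover have "(U, G) \<in> R" using that U(2) by (simp add: R_def)
    ultimately show ?thesis using max by blast
  qed
  have "eventually P U" if "\<not> eventually (\<lambda>x. \<not> P x) U" for P
  proof -
    let ?G = "inf U (principal {x. P x})"
    have "?G \<noteq> bot"
      using that by (simp add: trivial_limit_def eventually_inf_principal)
    then have "?G = U" by (rule maximal) simp
    moreover have "eventually P ?G" by (simp add: eventually_inf_principal)
    ultimately show ?thesis by simp
  qed
  with U show ?thesis unfolding free_ultrafilter_def by blast
qed

lemma free_ultrafilter_filtermap:
  fixes f :: "'a \<Rightarrow> 'b"
  assumes "free_ultrafilter F" "inj f"
  shows "free_ultrafilter (filtermap f F)"
proof -
  have "filtermap f F \<le> cofinite"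
  proof (rule filter_leI)
    fix P :: "'b \<Rightarrow> bool" assume "eventually P cofinite"
    then have "eventually (\<lambda>x. P (f x)) cofinite"
      using finite_vimageI[OF _ \<open>inj f\<close>, of "{x. \<not> P x}"]
      by (simp add: eventually_cofinite vimage_def)
    then show "eventually P (filtermap f F)"
      using assms(1) by (auto simp: free_ultrafilter_def eventually_filtermap le_filter_def)
  qed
  then show ?thesis
    using assms(1) by (auto simp: free_ultrafilter_def eventually_filtermap filtermap_bot_iff)
qed

lemma free_ultrafilter_infinite:
  assumes "free_ultrafilter F" "eventually P F"
  shows "infinite {x. P x}"
proof
  assume "finite {x. P x}"
  then have "eventually (\<lambda>x. \<not> P x) F"
    using assms(1) by (auto simp: free_ultrafilter_def eventually_cofinite le_filter_def)
  with assms(2) have "eventually (\<lambda>_. False) F" by (auto elim: eventually_rev_mp)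
  with assms(1) show False by (simp add: free_ultrafilter_def)
qed

section \<open>Robust connectivity\<close>

definition avoiding_path :: "('a \<Rightarrow> 'a \<Rightarrow> bool) \<Rightarrow> 'a set \<Rightarrow> 'a \<Rightarrow> 'a \<Rightarrow> 'a list \<Rightarrow> bool" where
  "avoiding_path R X x y xs \<longleftrightarrow>
     xs \<noteq> [] \<and> hd xs = x \<and> last xs = y \<and> distinct xs \<and> successively R xs \<and> set xs \<inter> X = {}"

definition robustly_conn :: "('a \<Rightarrow> 'a \<Rightarrow> bool) \<Rightarrow> 'a \<Rightarrow> 'a \<Rightarrow> bool" where
  "robustly_conn R x y \<longleftrightarrow>
     (\<forall>X. finite X \<longrightarrow> x \<notin> X \<longrightarrow> y \<notin> X \<longrightarrow> (\<exists>xs. avoiding_path R X x y xs))"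

definition linked :: "('a \<Rightarrow> 'a \<Rightarrow> bool) \<Rightarrow> 'a set \<Rightarrow> bool" where
  "linked R S \<longleftrightarrow> (\<forall>x\<in>S. \<forall>y\<in>S. robustly_conn R x y)"

lemma infinite_ex_notin: "infinite S \<Longrightarrow> finite X \<Longrightarrow> \<exists>x\<in>S. x \<notin> X"
  using infinite_imp_nonempty[OF Diff_infinite_finite] by blast

lemma robustly_connD:
  "robustly_conn R x y \<Longrightarrow> finite X \<Longrightarrow> x \<notin> X \<Longrightarrow> y \<notin> X \<Longrightarrow> \<exists>xs. avoiding_path R X x y xs"
  by (simp add: robustly_conn_def)

lemma avoiding_path_Un:
  "avoiding_path R (A \<union> B) x y xs \<longleftrightarrow> avoiding_path R A x y xs \<and> set xs \<inter> B = {}"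
  by (auto simp: avoiding_path_def)

lemma avoiding_path_last_in_set: "avoiding_path R X x y xs \<Longrightarrow> y \<in> set xs"
  unfolding avoiding_path_def by (metis last_in_set)

lemma avoiding_path_singleton: "x \<notin> X \<Longrightarrow> avoiding_path R X x x [x]"
  by (simp add: avoiding_path_def)

lemma avoiding_path_extend:
  assumes xs: "avoiding_path R (insert z X) x y xs" and yz: "robustly_conn R y z"
    and X: "finite X" "z \<notin> X"
  shows "\<exists>ys. avoiding_path R X x z (xs @ ys)"
proof -
  let ?X = "X \<union> (set xs - {y})"
  have xs_ne: "xs \<noteq> []" and xs_last: "last xs = y"
    and xs_out: "set xs \<inter> insert z X = {}"
    using xs by (simp_all add: avoiding_path_def)
  with avoiding_path_last_in_set[OF xs] X(2) have y: "y \<notin> ?X" "z \<notin> ?X" "y \<noteq> z" by auto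
  have "finite ?X" using X(1) by simp
  then obtain ys where ys: "avoiding_path R ?X y z ys"
    using robustly_connD[OF yz _ y(1,2)] by blast
  then obtain t where t: "ys = y # t" "t \<noteq> []"
    using y(3) by (cases ys) (auto simp: avoiding_path_def split: if_splits)
  have "set t \<inter> set xs = {}"
    using ys t by (auto simp: avoiding_path_def)
  moreover have "successively R (xs @ t)"
    using xs ys t xs_ne xs_last
    by (auto simp: avoiding_path_def successively_append_iff neq_Nil_conv)
  ultimately show ?thesis
    using xs ys t by (intro exI[of _ t]) (auto simp: avoiding_path_def)
qed

lemma robustly_conn_refl: "robustly_conn R x x"
  unfolding robustly_conn_def by (auto intro: avoiding_path_singleton)

lemma robustly_conn_edge:
  assumes "R x y"
  shows "robustly_conn R x y"
proof (cases "x = y")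
  case True
  then show ?thesis by (simp add: robustly_conn_refl)
next
  case False
  with assms show ?thesis
    unfolding robustly_conn_def avoiding_path_def by (auto intro!: exI[of _ "[x, y]"])
qed

lemma robustly_conn_sym:
  assumes "symp R" "robustly_conn R x y"
  shows "robustly_conn R y x"
  unfolding robustly_conn_def
proof (intro allI impI)
  fix X assume X: "finite X" "y \<notin> X" "x \<notin> X"
  obtain xs where "avoiding_path R X x y xs"
    using robustly_connD[OF assms(2) X(1,3,2)] by blast
  moreover have "successively R xs \<Longrightarrow> successively R (rev xs)"
    using assms(1) by (simp add: successively_mono symp_def)
  ultimately have "avoiding_path R X y x (rev xs)"
    by (simp add: avoiding_path_def hd_rev last_rev)
  then show "\<exists>xs. avoiding_path R X y x xs" ..
qed

text \<open>Robust connectivity is not transitive, since the finite set to be avoided may contain the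
  intermediate vertex; infinitely many intermediate vertices suffice.\<close>

lemma robustly_conn_via:
  assumes "infinite {w. robustly_conn R x w \<and> robustly_conn R w y}"
  shows "robustly_conn R x y"
  unfolding robustly_conn_def
proof (intro allI impI)
  fix X assume X: "finite X" "x \<notin> X" "y \<notin> X"
  show "\<exists>xs. avoiding_path R X x y xs"
  proof (cases "x = y")
    case True
    then show ?thesis using avoiding_path_singleton[OF X(2)] by auto
  next
    case False
    have "finite (insert x (insert y X))" using X(1) by simp
    then obtain w where w: "robustly_conn R x w" "robustly_conn R w y" "w \<notin> insert x (insert y X)"
      using infinite_ex_notin[OF assms] by blast
    have "avoiding_path R (insert w (insert y X)) x x [x]"
      using X False w(3) by (intro avoiding_path_singleton) auto
    moreover have "finite (insert y X)" "w \<notin> insert y X" using X(1) w(3) by auto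
    ultimately obtain xs where "avoiding_path R (insert y X) x w xs"
      using avoiding_path_extend[OF _ w(1)] by blast
    then show ?thesis using avoiding_path_extend[OF _ w(2) X(1,3)] by blast
  qed
qed

lemma linked_Un:
  assumes "symp R" "linked R A" "linked R B" "A \<inter> B = {}"
    and edges: "\<And>X. finite X \<Longrightarrow> \<exists>a\<in>A. \<exists>b\<in>B. a \<notin> X \<and> b \<notin> X \<and> R a b"
  shows "linked R (A \<union> B)"
proof -
  have "robustly_conn R x y" if "x \<in> A" "y \<in> B" for x y
    unfolding robustly_conn_def
  proof (intro allI impI)
    fix X assume X: "finite X" "x \<notin> X" "y \<notin> X"
    have "finite (insert x (insert y X))" using X(1) by simp
    then obtain a b where ab: "a \<in> A" "b \<in> B" "a \<notin> insert x (insert y X)"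
      "b \<notin> insert x (insert y X)" "R a b"
      using edges by blast
    have xa: "robustly_conn R x a" and ab_conn: "robustly_conn R a b" and "robustly_conn R b y"
      using assms(2,3) that ab(1,2,5) by (auto simp: linked_def intro: robustly_conn_edge)
    have "a \<noteq> b" "x \<noteq> y" using assms(4) ab(1,2) that by blast+
    have "avoiding_path R (insert a (insert b (insert y X))) x x [x]"
      using X ab \<open>x \<noteq> y\<close> by (intro avoiding_path_singleton) auto
    moreover have "finite (insert b (insert y X))" "a \<notin> insert b (insert y X)"
      using X(1) ab(3) \<open>a \<noteq> b\<close> by auto
    ultimately obtain xs where "avoiding_path R (insert b (insert y X)) x a xs"
      using avoiding_path_extend[OF _ xa] by blast
    moreover have "finite (insert y X)" "b \<notin> insert y X" using X(1) ab(4) by auto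
    ultimately obtain ys where "avoiding_path R (insert y X) x b ys"
      using avoiding_path_extend[OF _ ab_conn] by blast
    then show "\<exists>zs. avoiding_path R X x y zs"
      using avoiding_path_extend[OF _ \<open>robustly_conn R b y\<close> X(1,3)] by blast
  qed
  then show ?thesis
    using assms(2,3) robustly_conn_sym[OF assms(1)] unfolding linked_def by blast
qed

lemma linked_if_common_neighbours:
  assumes "symp R" "\<And>x y. x \<in> S \<Longrightarrow> y \<in> S \<Longrightarrow> infinite {w. R x w \<and> R y w}"
  shows "linked R S"
  unfolding linked_def
proof (intro ballI robustly_conn_via)
  fix x y assume "x \<in> S" "y \<in> S"
  have "{w. R x w \<and> R y w} \<subseteq> {w. robustly_conn R x w \<and> robustly_conn R w y}"
    using assms(1) by (auto intro: robustly_conn_edge simp: symp_def)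
  then show "infinite {w. robustly_conn R x w \<and> robustly_conn R w y}"
    using assms(2)[OF \<open>x \<in> S\<close> \<open>y \<in> S\<close>] infinite_super by blast
qed

lemma linked_complete_bipartite:
  assumes "symp R" "infinite A" "infinite B" "A \<inter> B = {}" "\<And>a b. a \<in> A \<Longrightarrow> b \<in> B \<Longrightarrow> R a b"
  shows "linked R (A \<union> B)"
proof (rule linked_Un)
  show "linked R A"
  proof (rule linked_if_common_neighbours[OF assms(1)])
    fix a a' assume "a \<in> A" "a' \<in> A"
    then have "B \<subseteq> {w. R a w \<and> R a' w}" using assms(5) by blast
    then show "infinite {w. R a w \<and> R a' w}" using assms(3) by (rule infinite_super)
  qed
  show "linked R B"
  proof (rule linked_if_common_neighbours[OF assms(1)])
    fix b b' assume "b \<in> B" "b' \<in> B"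
    then have "A \<subseteq> {w. R b w \<and> R b' w}" using assms(1,5) by (blast dest: sympD)
    then show "infinite {w. R b w \<and> R b' w}" using assms(2) by (rule infinite_super)
  qed
  show "\<exists>a\<in>A. \<exists>b\<in>B. a \<notin> X \<and> b \<notin> X \<and> R a b" if X: "finite X" for X
  proof -
    obtain a b where "a \<in> A" "a \<notin> X" "b \<in> B" "b \<notin> X"
      using infinite_ex_notin[OF assms(2) X] infinite_ex_notin[OF assms(3) X] by blast
    then show ?thesis using assms(5) by blast
  qed
qed (fact assms(1,4))+

section \<open>Covering the vertices by two linked sets\<close>

definition typical :: "('a \<Rightarrow> 'a \<Rightarrow> bool) \<Rightarrow> 'a filter \<Rightarrow> 'a set \<Rightarrow> 'a set" where
  "typical R F S = {x \<in> S. eventually (R x) F}"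

lemma linked_typical:
  assumes "symp R" "free_ultrafilter F"
  shows "linked R (typical R F S)"
proof (rule linked_if_common_neighbours[OF assms(1)])
  fix x y assume "x \<in> typical R F S" "y \<in> typical R F S"
  then have "eventually (\<lambda>w. R x w \<and> R y w) F" by (simp add: typical_def eventually_conj)
  then show "infinite {w. R x w \<and> R y w}" by (rule free_ultrafilter_infinite[OF assms(2)])
qed

lemma typical_cover:
  assumes "free_ultrafilter F" "eventually (\<lambda>y. y \<in> Q) F"
    and "\<And>x y. x \<in> S \<Longrightarrow> y \<in> Q \<Longrightarrow> R1 x y \<or> R2 x y"
  shows "S \<subseteq> typical R1 F S \<union> typical R2 F S"
proof
  fix x assume "x \<in> S"
  have "eventually (R1 x) F \<or> eventually (\<lambda>y. \<not> R1 x y) F"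
    using assms(1) by (simp add: free_ultrafilter_def)
  moreover have "eventually (R2 x) F" if "eventually (\<lambda>y. \<not> R1 x y) F"
    using eventually_conj[OF assms(2) that] by (rule eventually_mono) (use assms(3) \<open>x \<in> S\<close> in blast)
  ultimately show "x \<in> typical R1 F S \<union> typical R2 F S"
    using \<open>x \<in> S\<close> by (auto simp: typical_def)
qed

lemma linked_bipartite_cover:
  assumes "symp R1" "symp R2" "linked R1 A" "linked R1 B" "A \<inter> B = {}"
    and coloured: "\<And>a b. a \<in> A \<Longrightarrow> b \<in> B \<Longrightarrow> R1 a b \<or> R2 a b"
  shows "\<exists>F S. finite F \<and> (linked R1 S \<or> linked R2 S) \<and> A \<union> B \<subseteq> F \<union> S"
proof (cases "finite A \<or> finite B")
  case True
  then show ?thesis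
  proof
    assume "finite A"
    with assms(4) show ?thesis by blast
  next
    assume "finite B"
    with assms(3) show ?thesis by blast
  qed
next
  case False
  show ?thesis
  proof (cases "\<forall>X. finite X \<longrightarrow> (\<exists>a\<in>A. \<exists>b\<in>B. a \<notin> X \<and> b \<notin> X \<and> R1 a b)")
    case True
    then have "linked R1 (A \<union> B)" using linked_Un[OF assms(1,3,4,5)] by blast
    then show ?thesis by blast
  next
    case no_edges: False
    then obtain X where X: "finite X" and "\<And>a b. a \<in> A - X \<Longrightarrow> b \<in> B - X \<Longrightarrow> \<not> R1 a b"
      by blast
    with coloured have "\<And>a b. a \<in> A - X \<Longrightarrow> b \<in> B - X \<Longrightarrow> R2 a b" by blast
    moreover have "infinite (A - X)" "infinite (B - X)" using False X by auto
    ultimately have "linked R2 ((A - X) \<union> (B - X))"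
      using assms(5) by (intro linked_complete_bipartite[OF assms(2)]) auto
    moreover have "A \<union> B \<subseteq> X \<union> ((A - X) \<union> (B - X))" by blast
    ultimately show ?thesis using X by blast
  qed
qed

lemma cover_by_infinite_parts:
  assumes "infinite V" "finite F" "V \<subseteq> F \<union> S1 \<union> S2" "P S1" "P S2"
  shows "\<exists>F' S1' S2'. finite F' \<and> infinite S1' \<and> infinite S2' \<and> P S1' \<and> P S2' \<and>
           V \<subseteq> F' \<union> S1' \<union> S2'"
proof (cases "finite S1")
  case True
  then have "infinite S2" using assms(1-3) by (meson finite_UnI finite_subset)
  with True show ?thesis
    using assms(2-5) by (intro exI[of _ "F \<union> S1"] exI[of _ S2] exI[of _ S2]) auto
next
  case S1: False
  show ?thesis
  proof (cases "finite S2")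
    case True
    with S1 show ?thesis
      using assms(2-5) by (intro exI[of _ "F \<union> S2"] exI[of _ S1] exI[of _ S1]) auto
  next
    case False
    with S1 show ?thesis using assms(2-5) by blast
  qed
qed

definition mono_edge :: "(nat set \<Rightarrow> bool) \<Rightarrow> bool \<Rightarrow> nat \<Rightarrow> nat \<Rightarrow> bool" where
  "mono_edge c K x y \<longleftrightarrow> KNN_adj x y \<and> c {x, y} = K"

lemma symp_mono_edge: "symp (mono_edge c K)"
  unfolding symp_def mono_edge_def KNN_adj_def by (auto simp: insert_commute add.commute)

lemma bipartite_cover_by_linked:
  assumes FP: "free_ultrafilter FP" "eventually (\<lambda>x. x \<in> P) FP"
    and FQ: "free_ultrafilter FQ" "eventually (\<lambda>y. y \<in> Q) FQ"
    and "P \<inter> Q = {}" and adj: "\<And>x y. x \<in> P \<Longrightarrow> y \<in> Q \<Longrightarrow> KNN_adj x y"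
  shows "\<exists>F S1 S2. finite F \<and> (\<exists>K. linked (mono_edge c K) S1) \<and>
           (\<exists>K. linked (mono_edge c K) S2) \<and> P \<union> Q \<subseteq> F \<union> S1 \<union> S2"
proof -
  have adj': "KNN_adj y x" if "x \<in> P" "y \<in> Q" for x y
    using adj[OF that] by (simp add: KNN_adj_def add.commute)
  have part: "\<exists>F S. finite F \<and> (\<exists>K'. linked (mono_edge c K') S) \<and>
      typical (mono_edge c K) FQ P \<union> typical (mono_edge c K) FP Q \<subseteq> F \<union> S" for K
  proof -
    have "\<exists>F S. finite F \<and> (linked (mono_edge c K) S \<or> linked (mono_edge c (\<not> K)) S) \<and>
      typical (mono_edge c K) FQ P \<union> typical (mono_edge c K) FP Q \<subseteq> F \<union> S"
      using \<open>P \<inter> Q = {}\<close> adj adj'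
      by (intro linked_bipartite_cover symp_mono_edge linked_typical FP(1) FQ(1))
         (auto simp: typical_def mono_edge_def)
    then show ?thesis by blast
  qed
  obtain F1 S1 where S1: "finite F1" "\<exists>K. linked (mono_edge c K) S1"
    "typical (mono_edge c True) FQ P \<union> typical (mono_edge c True) FP Q \<subseteq> F1 \<union> S1"
    using part[of True] by blast
  obtain F2 S2 where S2: "finite F2" "\<exists>K. linked (mono_edge c K) S2"
    "typical (mono_edge c False) FQ P \<union> typical (mono_edge c False) FP Q \<subseteq> F2 \<union> S2"
    using part[of False] by blast
  have colours: "mono_edge c True x y \<or> mono_edge c False x y" if "KNN_adj x y" for x y
    using that by (auto simp: mono_edge_def)
  have "P \<subseteq> typical (mono_edge c True) FQ P \<union> typical (mono_edge c False) FQ P"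
    by (rule typical_cover[OF FQ]) (use adj colours in blast)
  moreover have "Q \<subseteq> typical (mono_edge c True) FP Q \<union> typical (mono_edge c False) FP Q"
    by (rule typical_cover[OF FP]) (use adj' colours in blast)
  ultimately have "P \<union> Q \<subseteq> (F1 \<union> F2) \<union> S1 \<union> S2"
    using S1(3) S2(3) by blast
  with S1(1,2) S2(1,2) show ?thesis
    by (intro exI[of _ "F1 \<union> F2"] exI[of _ S1] exI[of _ S2]) simp
qed

lemma KNN_cover_by_linked:
  "\<exists>F S1 S2 K1 K2. finite F \<and> infinite S1 \<and> infinite S2 \<and>
     linked (mono_edge c K1) S1 \<and> linked (mono_edge c K2) S2 \<and> KNN_vertices \<subseteq> F \<union> S1 \<union> S2"
proof -
  obtain U :: "nat filter" where U: "free_ultrafilter U"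
    using free_ultrafilter_exists by blast
  define P where "P = {n::nat. even n \<and> n \<noteq> 0}"
  define Q where "Q = {n::nat. odd n}"
  have FP: "free_ultrafilter (filtermap (\<lambda>n. 2 * n + 2) U)"
    "eventually (\<lambda>x. x \<in> P) (filtermap (\<lambda>n. 2 * n + 2) U)"
    using U by (auto simp: P_def eventually_filtermap intro!: free_ultrafilter_filtermap inj_onI)
  have FQ: "free_ultrafilter (filtermap (\<lambda>n. 2 * n + 1) U)"
    "eventually (\<lambda>y. y \<in> Q) (filtermap (\<lambda>n. 2 * n + 1) U)"
    using U by (auto simp: Q_def eventually_filtermap intro!: free_ultrafilter_filtermap inj_onI)
  have V: "KNN_vertices = P \<union> Q"
    by (auto simp: KNN_vertices_def P_def Q_def odd_pos Suc_le_eq)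
  have "P \<inter> Q = {}" and adj: "\<And>x y. x \<in> P \<Longrightarrow> y \<in> Q \<Longrightarrow> KNN_adj x y"
    by (auto simp: P_def Q_def KNN_adj_def odd_pos Suc_le_eq)
  then obtain F S1 S2 where F: "finite F" and S: "\<exists>K. linked (mono_edge c K) S1"
    "\<exists>K. linked (mono_edge c K) S2" and cover: "KNN_vertices \<subseteq> F \<union> S1 \<union> S2"
    using bipartite_cover_by_linked[OF FP FQ \<open>P \<inter> Q = {}\<close> adj, of c] unfolding V by auto
  have "infinite KNN_vertices"
    using free_ultrafilter_infinite[OF FQ] by (simp add: V)
  from cover_by_infinite_parts[OF this F cover, where P = "\<lambda>S. \<exists>K. linked (mono_edge c K) S"]
  show ?thesis using S by auto
qed

section \<open>Exhausting two linked sets by disjoint paths\<close>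

definition inf_path :: "('a \<Rightarrow> 'a \<Rightarrow> bool) \<Rightarrow> 'a set \<Rightarrow> bool" where
  "inf_path R P \<longleftrightarrow> (\<exists>f. inj f \<and> P = range f \<and> (\<forall>i. R (f i) (f (Suc i))))"

lemma nth_prefix: "prefix xs ys \<Longrightarrow> i < length xs \<Longrightarrow> ys ! i = xs ! i"
  by (auto elim!: prefixE simp: nth_append)

lemma inf_path_UN_prefixes:
  assumes prefix: "\<And>n. prefix (L n) (L (Suc n))" and len: "\<And>n. n < length (L n)"
    and distinct: "\<And>n. distinct (L n)" and succ: "\<And>n. successively R (L n)"
  shows "inf_path R (\<Union>n. set (L n))"
proof -
  define f where "f i = L i ! i" for i
  have prefix_le: "prefix (L m) (L n)" if "m \<le> n" for m n
    using prefix_order.lift_Suc_mono_le[of L, OF prefix that] .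
  have nth: "L n ! i = f i" if "i < length (L n)" for n i
  proof (cases "i \<le> n")
    case True
    show ?thesis using nth_prefix[OF prefix_le[OF True] len[of i]] unfolding f_def .
  next
    case False
    then have "prefix (L n) (L i)" by (intro prefix_le) simp
    from nth_prefix[OF this that] show ?thesis unfolding f_def by (rule sym)
  qed
  have "inj f"
  proof (rule injI)
    fix i j assume "f i = f j"
    moreover have "i < length (L (max i j))" "j < length (L (max i j))"
      using len[of "max i j"] by auto
    ultimately show "i = j"
      using nth_eq_iff_index_eq[OF distinct] nth by metis
  qed
  moreover have "(\<Union>n. set (L n)) = range f"
  proof
    show "(\<Union>n. set (L n)) \<subseteq> range f"
      by (auto simp: in_set_conv_nth nth)
    show "range f \<subseteq> (\<Union>n. set (L n))"
      using len by (auto simp: f_def)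
  qed
  moreover have "R (f i) (f (Suc i))" for i
  proof -
    have "Suc i < length (L (Suc i))" by (fact len)
    moreover from this have "R (L (Suc i) ! i) (L (Suc i) ! Suc i)"
      by (rule successively_nth[OF succ])
    ultimately show ?thesis using nth[of i "Suc i"] nth[of "Suc i" "Suc i"] by simp
  qed
  ultimately show ?thesis unfolding inf_path_def by blast
qed

definition extend_path :: "('a \<Rightarrow> 'a \<Rightarrow> bool) \<Rightarrow> 'a set \<Rightarrow> 'a list \<Rightarrow> 'a \<Rightarrow> 'a list" where
  "extend_path R Y L t = L @ (SOME ys. avoiding_path R Y (hd L) t (L @ ys))"

definition least_outside :: "nat set \<Rightarrow> nat set \<Rightarrow> nat" where
  "least_outside S Y = (LEAST v. v \<in> S \<and> v \<notin> Y)"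

lemma least_outside_mem:
  assumes "infinite S" "finite Y"
  shows "least_outside S Y \<in> S" "least_outside S Y \<notin> Y"
proof -
  obtain v where "v \<in> S" "v \<notin> Y" using infinite_ex_notin[OF assms] by blast
  then have "least_outside S Y \<in> S \<and> least_outside S Y \<notin> Y"
    unfolding least_outside_def by (rule LeastI[of "\<lambda>v. v \<in> S \<and> v \<notin> Y", OF conjI])
  then show "least_outside S Y \<in> S" "least_outside S Y \<notin> Y" by auto
qed

lemma least_outside_le: "v \<in> S \<Longrightarrow> v \<notin> Y \<Longrightarrow> least_outside S Y \<le> v"
  unfolding least_outside_def by (rule Least_le) simp

definition grow :: "(nat \<Rightarrow> nat \<Rightarrow> bool) \<Rightarrow> nat set \<Rightarrow> nat set \<Rightarrow> nat list \<Rightarrow> nat list" where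
  "grow R S Y L = extend_path R Y L (least_outside S (Y \<union> set L))"

lemma grow_extends:
  assumes "linked R S" "infinite S" "finite Y" and L: "avoiding_path R Y x y L" "y \<in> S"
  defines "t \<equiv> least_outside S (Y \<union> set L)"
  shows "avoiding_path R Y x t (grow R S Y L)" "strict_prefix L (grow R S Y L)" "t \<in> S"
proof -
  have t: "t \<in> S" "t \<notin> Y" "t \<notin> set L"
    using least_outside_mem[OF assms(2), of "Y \<union> set L"] assms(3) unfolding t_def by auto
  have "avoiding_path R (insert t Y) x y L"
    using L(1) t(3) by (simp add: avoiding_path_def)
  moreover have "robustly_conn R y t" using assms(1) L(2) t(1) by (simp add: linked_def)
  ultimately have "\<exists>ys. avoiding_path R Y x t (L @ ys)"
    by (rule avoiding_path_extend[OF _ _ assms(3) t(2)])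
  moreover have "hd L = x" using L(1) by (simp add: avoiding_path_def)
  ultimately have "\<exists>ys. avoiding_path R Y (hd L) t (L @ ys)" by simp
  then have "avoiding_path R Y (hd L) t (extend_path R Y L t)"
    unfolding extend_path_def by (rule someI_ex)
  then have path: "avoiding_path R Y x t (grow R S Y L)"
    using \<open>hd L = x\<close> by (simp add: grow_def t_def)
  then show "avoiding_path R Y x t (grow R S Y L)" .
  have "grow R S Y L \<noteq> L" using path t(3) by (auto simp: avoiding_path_def)
  then show "strict_prefix L (grow R S Y L)"
    by (simp add: grow_def extend_path_def strict_prefix_def)
  show "t \<in> S" by (fact t(1))
qed

lemma least_outside_exhausts:
  fixes C D :: "nat \<Rightarrow> nat set"
  assumes S: "infinite S" and finite_D: "\<And>n. finite (D n)"
    and C_mono: "\<And>n. C n \<subseteq> C (Suc n)" and C_D: "\<And>n. C n \<subseteq> D n"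
    and D_C: "\<And>n. D n \<subseteq> W \<union> C (Suc n)" and target: "\<And>n. least_outside S (D n) \<in> C (Suc n)"
    and v: "v \<in> S" "v \<notin> W"
  shows "\<exists>n. v \<in> C n"
proof (rule ccontr)
  assume never: "\<nexists>n. v \<in> C n"
  define g where "g n = least_outside S (D n)" for n
  have "g n \<le> v" for n
  proof -
    have "v \<notin> D n" using D_C[of n] v(2) never by blast
    with v(1) show ?thesis unfolding g_def by (rule least_outside_le)
  qed
  then have "range g \<subseteq> {..v}" by auto
  moreover have "inj g"
  proof (rule linorder_injI)
    fix m n :: nat assume "m < n"
    then have "g m \<in> C n"
      using target[of m] lift_Suc_mono_le[of C, OF C_mono, of "Suc m" n] by (auto simp: g_def)
    moreover have "g n \<notin> C n"
      using least_outside_mem(2)[OF S finite_D[of n]] C_D[of n] by (auto simp: g_def)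
    ultimately show "g m \<noteq> g n" by auto
  qed
  ultimately have "finite (UNIV :: nat set)"
    by (meson finite_atMost finite_imageD finite_subset)
  then show False by simp
qed

locale two_linked_sets =
  fixes R1 R2 :: "nat \<Rightarrow> nat \<Rightarrow> bool" and S1 S2 W :: "nat set"
  assumes finite_W: "finite W" and infinite_S: "infinite S1" "infinite S2"
    and linked_S: "linked R1 S1" "linked R2 S2"
begin

definition "start1 = least_outside S1 W"
definition "start2 = least_outside S2 (insert start1 W)"

text \<open>Growing the two paths alternately keeps both finite at every stage, so linkedness can route
  each around the other; aiming each time at the least unused vertex makes them exhaust S1 and S2.\<close>

primrec paths :: "nat \<Rightarrow> nat list \<times> nat list" where
  "paths 0 = ([start1], [start2])"
| "paths (Suc n) =
     (let L1 = grow R1 S1 (W \<union> set (snd (paths n))) (fst (paths n))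
      in (L1, grow R2 S2 (W \<union> set L1) (snd (paths n))))"

abbreviation "path1 n \<equiv> fst (paths n)"
abbreviation "path2 n \<equiv> snd (paths n)"

definition admissible :: "nat list \<Rightarrow> nat list \<Rightarrow> bool" where
  "admissible L1 L2 \<longleftrightarrow>
     (\<exists>y\<in>S1. avoiding_path R1 (W \<union> set L2) start1 y L1) \<and>
     (\<exists>y\<in>S2. avoiding_path R2 (W \<union> set L1) start2 y L2)"

lemma admissible_grow:
  assumes "admissible L1 L2"
  defines "L1' \<equiv> grow R1 S1 (W \<union> set L2) L1"
  defines "L2' \<equiv> grow R2 S2 (W \<union> set L1') L2"
  shows "admissible L1' L2'" "strict_prefix L1 L1'" "strict_prefix L2 L2'"
    "least_outside S1 (W \<union> set L2 \<union> set L1) \<in> set L1'"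
    "least_outside S2 (W \<union> set L1' \<union> set L2) \<in> set L2'"
proof -
  obtain y1 y2 where y1: "y1 \<in> S1" "avoiding_path R1 (W \<union> set L2) start1 y1 L1"
    and y2: "y2 \<in> S2" "avoiding_path R2 (W \<union> set L1) start2 y2 L2"
    using assms(1) by (auto simp: admissible_def)
  have "finite (W \<union> set L2)" using finite_W by simp
  note g1 = grow_extends[OF linked_S(1) infinite_S(1) this y1(2,1), folded L1'_def]
  have L2: "avoiding_path R2 (W \<union> set L1') start2 y2 L2"
    using g1(1) y2(2) by (auto simp: avoiding_path_Un)
  have "finite (W \<union> set L1')" using finite_W by simp
  note g2 = grow_extends[OF linked_S(2) infinite_S(2) this L2 y2(1), folded L2'_def]
  show "admissible L1' L2'"
    using g1 g2 by (auto simp: admissible_def avoiding_path_Un)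
  show "strict_prefix L1 L1'" "strict_prefix L2 L2'" by (fact g1(2) g2(2))+
  show "least_outside S1 (W \<union> set L2 \<union> set L1) \<in> set L1'"
    "least_outside S2 (W \<union> set L1' \<union> set L2) \<in> set L2'"
    using g1(1) g2(1) by (simp_all add: avoiding_path_last_in_set)
qed

lemma admissible_paths: "admissible (path1 n) (path2 n)"
proof (induction n)
  case 0
  have "start1 \<in> S1" "start1 \<notin> W"
    using least_outside_mem[OF infinite_S(1) finite_W] by (simp_all add: start1_def)
  moreover have "start2 \<in> S2" "start2 \<notin> insert start1 W"
    using least_outside_mem[OF infinite_S(2), of "insert start1 W"] finite_W
    by (simp_all add: start2_def)
  ultimately show ?case by (auto simp: admissible_def avoiding_path_def)
next
  case (Suc n)
  then show ?case using admissible_grow(1)[OF Suc.IH] by (simp add: Let_def)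
qed

lemma paths_Suc:
  "strict_prefix (path1 n) (path1 (Suc n))" "strict_prefix (path2 n) (path2 (Suc n))"
  "least_outside S1 (W \<union> set (path2 n) \<union> set (path1 n)) \<in> set (path1 (Suc n))"
  "least_outside S2 (W \<union> set (path1 (Suc n)) \<union> set (path2 n)) \<in> set (path2 (Suc n))"
  using admissible_grow(2-5)[OF admissible_paths[of n]] by (simp_all add: Let_def)

lemma length_paths: "n < length (path1 n)" "n < length (path2 n)"
proof (induction n)
  case (Suc n)
  with paths_Suc(1,2)[of n] show "Suc n < length (path1 (Suc n))" "Suc n < length (path2 (Suc n))"
    using prefix_length_less by fastforce+
qed simp_all

lemma set_paths_Suc: "set (path1 n) \<subseteq> set (path1 (Suc n))" "set (path2 n) \<subseteq> set (path2 (Suc n))"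
  using paths_Suc(1,2)[of n] by (auto simp: strict_prefix_def dest: set_mono_prefix)

lemma set_paths_mono:
  assumes "m \<le> n"
  shows "set (path1 m) \<subseteq> set (path1 n)" "set (path2 m) \<subseteq> set (path2 n)"
  using lift_Suc_mono_le[of "\<lambda>k. set (path1 k)", OF set_paths_Suc(1) assms]
    lift_Suc_mono_le[of "\<lambda>k. set (path2 k)", OF set_paths_Suc(2) assms] .

lemma exhausting_paths:
  "\<exists>P1 P2. inf_path R1 P1 \<and> inf_path R2 P2 \<and> P1 \<inter> P2 = {} \<and> (P1 \<union> P2) \<inter> W = {} \<and>
     S1 \<union> S2 \<subseteq> W \<union> P1 \<union> P2"
proof (intro exI conjI)
  let ?P1 = "\<Union>n. set (path1 n)" and ?P2 = "\<Union>n. set (path2 n)"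
  have path1: "distinct (path1 n)" "successively R1 (path1 n)" "set (path1 n) \<inter> W = {}"
    and path2: "distinct (path2 n)" "successively R2 (path2 n)" "set (path2 n) \<inter> W = {}"
    and disjoint: "set (path1 n) \<inter> set (path2 n) = {}" for n
    using admissible_paths[of n] by (auto simp: admissible_def avoiding_path_def)
  show "inf_path R1 ?P1"
    using paths_Suc(1) length_paths(1) path1(1,2)
    by (intro inf_path_UN_prefixes) (auto simp: strict_prefix_def)
  show "inf_path R2 ?P2"
    using paths_Suc(2) length_paths(2) path2(1,2)
    by (intro inf_path_UN_prefixes) (auto simp: strict_prefix_def)
  show "?P1 \<inter> ?P2 = {}"
  proof (intro equalityI subsetI)
    fix x assume "x \<in> ?P1 \<inter> ?P2"
    then obtain m k where "x \<in> set (path1 m)" "x \<in> set (path2 k)" by blast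
    then have "x \<in> set (path1 (max m k))" "x \<in> set (path2 (max m k))"
      using set_paths_mono[of m "max m k"] set_paths_mono[of k "max m k"] by auto
    then show "x \<in> {}" using disjoint by blast
  qed simp
  show "(?P1 \<union> ?P2) \<inter> W = {}" using path1(3) path2(3) by blast
  show "S1 \<union> S2 \<subseteq> W \<union> ?P1 \<union> ?P2"
  proof
    fix v assume v: "v \<in> S1 \<union> S2"
    define C where "C n = set (path1 n) \<union> set (path2 n)" for n
    have C_mono: "C n \<subseteq> C (Suc n)" for n
      using set_paths_Suc[of n] by (auto simp: C_def simp del: paths.simps)
    have "\<exists>n. v \<in> C n" if "v \<notin> W"
    proof (cases "v \<in> S1")
      case True
      show ?thesis
        by (rule least_outside_exhausts[where D = "\<lambda>n. W \<union> set (path2 n) \<union> set (path1 n)"])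
          (use infinite_S(1) finite_W C_mono paths_Suc(3) True that
           in \<open>fastforce simp: C_def simp del: paths.simps\<close>)+
    next
      case False
      with v have "v \<in> S2" by blast
      show ?thesis
        by (rule least_outside_exhausts[where D = "\<lambda>n. W \<union> set (path1 (Suc n)) \<union> set (path2 n)"])
          (use infinite_S(2) finite_W C_mono set_paths_Suc paths_Suc(4) \<open>v \<in> S2\<close> that
           in \<open>fastforce simp: C_def simp del: paths.simps\<close>)+
    qed
    then show "v \<in> W \<union> ?P1 \<union> ?P2" by (auto simp: C_def)
  qed
qed

end

lemma mono_path_if_inf_path: "inf_path (mono_edge c K) P \<Longrightarrow> mono_path c K P"
  unfolding mono_path_def inf_path_def mono_edge_def by blast

lemma inf_path_subset_KNN_vertices: "inf_path (mono_edge c K) P \<Longrightarrow> P \<subseteq> KNN_vertices"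
  unfolding inf_path_def mono_edge_def KNN_adj_def KNN_vertices_def by auto

theorem mainTheorem7:
  fixes c :: "nat set \<Rightarrow> bool"
  shows "\<exists>F P1 P2 col1 col2. finite F \<and> mono_path c col1 P1 \<and> mono_path c col2 P2 \<and>
           F \<inter> P1 = {} \<and> F \<inter> P2 = {} \<and> P1 \<inter> P2 = {} \<and>
           F \<union> P1 \<union> P2 = KNN_vertices"
proof -
  obtain F S1 S2 K1 K2 where "finite F" "infinite S1" "infinite S2"
    "linked (mono_edge c K1) S1" "linked (mono_edge c K2) S2"
    and cover: "KNN_vertices \<subseteq> F \<union> S1 \<union> S2"
    using KNN_cover_by_linked[of c] by auto
  then interpret two_linked_sets "mono_edge c K1" "mono_edge c K2" S1 S2 F
    by unfold_locales
  obtain P1 P2 where P: "inf_path (mono_edge c K1) P1" "inf_path (mono_edge c K2) P2"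
    and "P1 \<inter> P2 = {}" "S1 \<union> S2 \<subseteq> F \<union> P1 \<union> P2"
    using exhausting_paths by auto
  have "P1 \<union> P2 \<subseteq> KNN_vertices"
    using inf_path_subset_KNN_vertices[OF P(1)] inf_path_subset_KNN_vertices[OF P(2)] by blast
  moreover have "KNN_vertices - (P1 \<union> P2) \<subseteq> F"
    using cover \<open>S1 \<union> S2 \<subseteq> F \<union> P1 \<union> P2\<close> by blast
  then have "finite (KNN_vertices - (P1 \<union> P2))" using \<open>finite F\<close> by (rule finite_subset)
  ultimately show ?thesis
    using mono_path_if_inf_path[OF P(1)] mono_path_if_inf_path[OF P(2)] \<open>P1 \<inter> P2 = {}\<close>
    by (intro exI[of _ "KNN_vertices - (P1 \<union> P2)"] exI[of _ P1] exI[of _ P2] exI[of _ K1] exI[of _ K2])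
      auto
qed

end
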